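(* Let $A,B\in\mathbb{M}_n$ be Hermitian matrices with $\sigma(A)\cup\sigma(B)\subset\mathbb{D}$, let $f,g\in\mathfrak{H}$, and let $X\in\mathbb{M}_n$. Then $$\|f(A)X\pm Xg(B)\|_2\le\left\|\frac{X+|A|X}{d_A}+\frac{X+X|B|}{d_B}\right\|_2$$ and $$\|f(A)Xg(B)\pm X\|_2\le\left\|\frac{I+|A|}{d_A}\,X\,\frac{I+|B|}{d_B}+X\right\|_2.$$
   Context: $\mathbb{M}_n$ is the algebra of $n\times n$ complex matrices; $\|\cdot\|_2$ is the Hilbert–Schmidt (Frobenius) norm; $|T|=(T^*T)^{1/2}$. $\mathbb{D}$ is the open unit disk, $d_A=\mathrm{dist}(\partial\mathbb{D},\sigma(A))$. $\mathfrak{H}$ is the set of analytic $f:\mathbb{D}\to\mathbb{C}$ with $\operatorname{Re}f>0$ and $f(0)=1$; $f(A)$ is defined by the functional calculus (for Hermitian $A=U\operatorname{diag}(\lambda_j)U^*$, $f(A)=U\operatorname{diag}(f(\lambda_j))U^*$). *)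

theory Defs
  imports "HOL-Analysis.Analysis" "Jordan_Normal_Form.Spectral_Radius"
begin

definition cadj :: "complex mat \<Rightarrow> complex mat" where
  "cadj A = mat (dim_col A) (dim_row A) (\<lambda>(i,j). cnj (A $$ (j,i)))"

definition hermitian_mat :: "complex mat \<Rightarrow> bool" where
  "hermitian_mat A \<longleftrightarrow> A \<in> carrier_mat (dim_row A) (dim_row A) \<and> cadj A = A"

definition unitary_mat :: "nat \<Rightarrow> complex mat \<Rightarrow> bool" where
  "unitary_mat n U \<longleftrightarrow> U \<in> carrier_mat n n \<and> cadj U * U = 1\<^sub>m n \<and> U * cadj U = 1\<^sub>m n"

definition mat_fun :: "(complex \<Rightarrow> complex) \<Rightarrow> complex mat \<Rightarrow> complex mat" where
  "mat_fun f A = (SOME F. \<exists>U lam. unitary_mat (dim_row A) U \<and>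
      A = U * mat_diag (dim_row A) lam * cadj U \<and>
      F = U * mat_diag (dim_row A) (\<lambda>j. f (lam j)) * cadj U)"

definition mat_abs :: "complex mat \<Rightarrow> complex mat" where
  "mat_abs T = mat_fun (\<lambda>z. complex_of_real (sqrt (Re z))) (cadj T * T)"

definition hs_norm :: "complex mat \<Rightarrow> real" where
  "hs_norm A = sqrt (\<Sum>i<dim_row A. \<Sum>j<dim_col A. (cmod (A $$ (i,j)))\<^sup>2)"

definition dA :: "complex mat \<Rightarrow> real" where
  "dA A = setdist (sphere 0 1) (spectrum A)"

definition Hclass :: "(complex \<Rightarrow> complex) set" where
  "Hclass = {f. f holomorphic_on ball 0 1 \<and> (\<forall>z\<in>ball 0 1. Re (f z) > 0) \<and> f 0 = 1}"

end

theory Submission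
  imports Defs "HOL-Complex_Analysis.Conformal_Mappings"
begin

text \<open>Diagonalise A = V diag(mu) V* and B = W diag(nu) W* by unitaries. Then f(A), |A|, g(B), |B|
  are diagonal in the same bases, and with Y = V* X W every matrix in the statement becomes
  V M W* with M_ij = phi(i,j) Y_ij for an explicit scalar phi(i,j). The Hilbert--Schmidt norm is
  invariant under M \<mapsto> V M W* and monotone in the moduli of the entries, so it suffices to compare the
  scalars phi entry by entry. This reduces to |f(z)| \<le> (1 + |z|)/(1 - |z|) for f in the
  Caratheodory class (Schwarz's lemma applied to (f - 1)/(f + 1)), together with
  1 - |z| \<ge> d_A for z in the spectrum of A.\<close>

lemma cadj_carrier_mat [simp]: "A \<in> carrier_mat n m \<Longrightarrow> cadj A \<in> carrier_mat m n"
  unfolding cadj_def by auto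

lemma dim_cadj [simp]: "dim_row (cadj A) = dim_col A" "dim_col (cadj A) = dim_row A"
  unfolding cadj_def by auto

lemma index_cadj [simp]:
  "i < dim_col A \<Longrightarrow> j < dim_row A \<Longrightarrow> cadj A $$ (i,j) = cnj (A $$ (j,i))"
  unfolding cadj_def by auto

lemma cadj_cadj [simp]: "cadj (cadj A) = A"
  by (rule eq_matI) auto

lemma cadj_mult:
  assumes "A \<in> carrier_mat n m" "B \<in> carrier_mat m k"
  shows "cadj (A * B) = cadj B * cadj A"
  using assms by (intro eq_matI) (auto simp: scalar_prod_def mult.commute)

lemma cadj_mat_diag: "cadj (mat_diag n d) = mat_diag n (\<lambda>i. cnj (d i))"
  by (intro eq_matI) (auto simp: mat_diag_def)

lemma dim_mat_diag [simp]: "dim_row (mat_diag n d) = n" "dim_col (mat_diag n d) = n"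
  unfolding mat_diag_def by auto

lemma unitary_mat_carrier: "unitary_mat n U \<Longrightarrow> U \<in> carrier_mat n n"
  unfolding unitary_mat_def by auto

lemma unitary_matI: "U \<in> carrier_mat n n \<Longrightarrow> cadj U * U = 1\<^sub>m n \<Longrightarrow> unitary_mat n U"
  unfolding unitary_mat_def using mat_mult_left_right_inverse[of "cadj U" n U] by auto

lemma unitary_mat_simps:
  assumes "unitary_mat n U"
  shows "cadj U * U = 1\<^sub>m n" "U * cadj U = 1\<^sub>m n"
    "X \<in> carrier_mat n k \<Longrightarrow> cadj U * (U * X) = X"
    "X \<in> carrier_mat n k \<Longrightarrow> U * (cadj U * X) = X"
proof -
  have U: "U \<in> carrier_mat n n" using assms unitary_mat_carrier by auto
  show 1: "cadj U * U = 1\<^sub>m n" and 2: "U * cadj U = 1\<^sub>m n"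
    using assms unfolding unitary_mat_def by auto
  show "X \<in> carrier_mat n k \<Longrightarrow> cadj U * (U * X) = X"
    using U by (simp add: assoc_mult_mat[of _ n n _ n _ k, symmetric] 1)
  show "X \<in> carrier_mat n k \<Longrightarrow> U * (cadj U * X) = X"
    using U by (simp add: assoc_mult_mat[of _ n n _ n _ k, symmetric] 2)
qed

lemma unitary_mat_mult:
  assumes "unitary_mat n U" "unitary_mat n V"
  shows "unitary_mat n (U * V)"
proof (rule unitary_matI)
  have U: "U \<in> carrier_mat n n" and V: "V \<in> carrier_mat n n"
    using assms unitary_mat_carrier by auto
  show "U * V \<in> carrier_mat n n" using U V by auto
  have "cadj (U * V) * (U * V) = cadj V * (cadj U * U) * V"
    using U V by (simp add: cadj_mult assoc_mult_mat[of _ n n _ n _ n] mult_carrier_mat[of _ n n _ n])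
  also have "\<dots> = 1\<^sub>m n" using assms V by (simp add: unitary_mat_simps)
  finally show "cadj (U * V) * (U * V) = 1\<^sub>m n" .
qed

lemma cscalar_prod_self:
  "v \<in> carrier_vec n \<Longrightarrow> v \<bullet>c v = complex_of_real (\<Sum>k<n. (cmod (v $ k))\<^sup>2)"
  by (auto simp: scalar_prod_def atLeast0LessThan intro!: sum.cong)
     (metis complex_norm_square of_real_power)

text \<open>Normalised Gram--Schmidt on a basis completion of v.\<close>
lemma unitary_mat_first_col:
  fixes v :: "complex vec"
  assumes v: "v \<in> carrier_vec n" and v0: "v \<noteq> 0\<^sub>v n"
  shows "\<exists>U c. unitary_mat n U \<and> (\<forall>i<n. U $$ (i,0) = c * v $ i)"
proof -
  interpret cof_vec_space n "TYPE(complex)" .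
  define b where "b = basis_completion v"
  from basis_completion[OF v v0, folded b_def]
  have dist_b: "distinct b" and indep: "\<not> lin_dep (set b)" and bc: "set b \<subseteq> carrier_vec n"
    and hdb: "hd b = v" and len_b: "length b = n" by auto
  have n: "n \<noteq> 0" using v v0 by auto
  from hdb len_b n obtain vs where bv: "b = v # vs" by (cases b, auto)
  define ws where "ws = gram_schmidt n b"
  from gram_schmidt_result[OF bc dist_b indep refl, folded ws_def]
  have wsc: "set ws \<subseteq> carrier_vec n" and orth: "corthogonal ws" and len: "length ws = n"
    by (auto simp: len_b)
  have "hd ws = v" unfolding ws_def bv by (rule gram_schmidt_hd[OF v])
  then have ws0: "ws ! 0 = v" using n len by (cases ws) auto
  define s where "s j = sqrt (\<Sum>k<n. (cmod (ws ! j $ k))\<^sup>2)" for j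
  have wj: "ws ! j \<in> carrier_vec n" if "j < n" for j using wsc len that by auto
  have cs: "ws ! i \<bullet>c ws ! j = complex_of_real (s i * s j) * (if i = j then 1 else 0)"
    if "i < n" "j < n" for i j
  proof (cases "i = j")
    case True
    have "ws ! i \<bullet>c ws ! i = complex_of_real ((s i)\<^sup>2)"
      unfolding cscalar_prod_self[OF wj[OF that(1)]] s_def by (simp add: sum_nonneg)
    then show ?thesis using True by (simp add: power2_eq_square)
  next
    case False
    then show ?thesis using corthogonalD[OF orth, of i j] that len by auto
  qed
  have s_nonzero: "s j \<noteq> 0" if "j < n" for j
  proof
    assume "s j = 0"
    then have "ws ! j \<bullet>c ws ! j = 0" using cs[OF that that] by simp
    then show False using corthogonalD[OF orth, of j j] that len by auto
  qed
  define U where "U = mat n n (\<lambda>(i,j). ws ! j $ i / complex_of_real (s j))"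
  have U: "U \<in> carrier_mat n n" unfolding U_def by auto
  have "cadj U * U = 1\<^sub>m n"
  proof (rule eq_matI)
    fix i j assume "i < dim_row (1\<^sub>m n)" and "j < dim_col (1\<^sub>m n)"
    then have i: "i < n" and j: "j < n" by auto
    have "(cadj U * U) $$ (i, j)
        = (\<Sum>k = 0..<n. cnj (ws ! i $ k) * ws ! j $ k) / (complex_of_real (s i * s j))"
      using i j U by (simp add: scalar_prod_def U_def sum_divide_distrib)
    also have "(\<Sum>k = 0..<n. cnj (ws ! i $ k) * ws ! j $ k) = ws ! j \<bullet>c ws ! i"
      using wj[OF i] wj[OF j] by (simp add: scalar_prod_def mult.commute)
    also have "\<dots> / complex_of_real (s i * s j) = 1\<^sub>m n $$ (i, j)"
      using cs[OF j i] s_nonzero[OF i] s_nonzero[OF j] i j by auto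
    finally show "(cadj U * U) $$ (i, j) = 1\<^sub>m n $$ (i, j)" .
  qed (use U in auto)
  then have "unitary_mat n U" using unitary_matI[OF U] by auto
  moreover have "\<forall>i<n. U $$ (i,0) = (1 / complex_of_real (s 0)) * v $ i"
    using n ws0 unfolding U_def by auto
  ultimately show ?thesis by blast
qed

section \<open>The spectral theorem for Hermitian matrices\<close>

definition diag_block :: "complex \<Rightarrow> complex mat \<Rightarrow> complex mat" where
  "diag_block c M = mat (Suc (dim_row M)) (Suc (dim_col M)) (\<lambda>(i,j).
      if i = 0 then (if j = 0 then c else 0) else if j = 0 then 0 else M $$ (i - 1, j - 1))"

lemma dim_diag_block [simp]:
  "dim_row (diag_block c M) = Suc (dim_row M)" "dim_col (diag_block c M) = Suc (dim_col M)"
  unfolding diag_block_def by auto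

lemma diag_block_carrier_mat [simp]:
  "M \<in> carrier_mat m k \<Longrightarrow> diag_block c M \<in> carrier_mat (Suc m) (Suc k)"
  unfolding diag_block_def by auto

lemma diag_block_mult:
  assumes M: "M \<in> carrier_mat m k" and N: "N \<in> carrier_mat k l"
  shows "diag_block a M * diag_block b N = diag_block (a * b) (M * N)"
proof (rule eq_matI)
  fix i j assume "i < dim_row (diag_block (a * b) (M * N))" "j < dim_col (diag_block (a * b) (M * N))"
  then have i: "i < Suc m" and j: "j < Suc l" using M N unfolding diag_block_def by auto
  have "(diag_block a M * diag_block b N) $$ (i, j)
      = (\<Sum>t = 0..<Suc k. diag_block a M $$ (i, t) * diag_block b N $$ (t, j))"
    using i j M N by (simp add: scalar_prod_def del: sum.atLeast0_lessThan_Suc)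
  also have "\<dots> = diag_block a M $$ (i, 0) * diag_block b N $$ (0, j)
      + (\<Sum>t = 0..<k. diag_block a M $$ (i, Suc t) * diag_block b N $$ (Suc t, j))"
    by (subst sum.atLeast0_lessThan_Suc_shift) simp
  also have "\<dots> = diag_block (a * b) (M * N) $$ (i, j)"
    using i j M N by (cases i; cases j) (auto simp: diag_block_def scalar_prod_def)
  finally show "(diag_block a M * diag_block b N) $$ (i, j) = diag_block (a * b) (M * N) $$ (i, j)" .
qed (use M N in \<open>auto simp: diag_block_def\<close>)

lemma cadj_diag_block: "cadj (diag_block a M) = diag_block (cnj a) (cadj M)"
  by (rule eq_matI) (auto simp: diag_block_def)

lemma diag_block_one: "diag_block 1 (1\<^sub>m m) = 1\<^sub>m (Suc m)"
  by (rule eq_matI) (auto simp: diag_block_def)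

lemma diag_block_mat_diag:
  "diag_block e (mat_diag m d) = mat_diag (Suc m) (\<lambda>i. if i = 0 then e else d (i - 1))"
  by (rule eq_matI) (auto simp: diag_block_def mat_diag_def)

text \<open>Conjugating by a unitary whose first column is an eigenvector splits off a 1 x 1 block;
  induct on the remaining Hermitian block.\<close>
lemma hermitian_unitary_diagonalization:
  fixes A :: "complex mat"
  assumes "A \<in> carrier_mat n n" "cadj A = A"
  shows "\<exists>U lam. unitary_mat n U \<and> cadj U * A * U = mat_diag n lam"
  using assms
proof (induction n arbitrary: A)
  case 0
  have "unitary_mat 0 (1\<^sub>m 0)" unfolding unitary_mat_def by auto
  moreover have "cadj (1\<^sub>m 0) * A * 1\<^sub>m 0 = mat_diag 0 (\<lambda>_. 0)"
    using 0 by (intro eq_matI) (auto simp: mat_diag_def)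
  ultimately show ?case by blast
next
  case (Suc m A)
  let ?N = "Suc m"
  have A: "A \<in> carrier_mat ?N ?N" and hA: "cadj A = A" using Suc by auto
  obtain e where "e \<in> spectrum A" using spectrum_non_empty[OF A] by auto
  then have "eigenvector A (find_eigenvector A e) e"
    using find_eigenvector[OF A] unfolding spectrum_def by auto
  then obtain v where v: "v \<in> carrier_vec ?N" and v0: "v \<noteq> 0\<^sub>v ?N" and Av: "A *\<^sub>v v = e \<cdot>\<^sub>v v"
    using A unfolding eigenvector_def by auto
  obtain U0 c where U0u: "unitary_mat ?N U0" and U0c: "\<forall>i<?N. U0 $$ (i,0) = c * v $ i"
    using unitary_mat_first_col[OF v v0] by blast
  have U0: "U0 \<in> carrier_mat ?N ?N" using U0u unitary_mat_carrier by auto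
  have AU0: "(A * U0) $$ (k, 0) = e * U0 $$ (k, 0)" if k: "k < ?N" for k
  proof -
    have "(A * U0) $$ (k, 0) = (\<Sum>t = 0..<?N. A $$ (k, t) * (c * v $ t))"
      using A U0 k U0c by (simp add: scalar_prod_def)
    also have "\<dots> = c * (A *\<^sub>v v) $ k"
      using A v k by (simp add: scalar_prod_def sum_distrib_left algebra_simps)
    also have "\<dots> = e * U0 $$ (k, 0)" using Av v k U0c by simp
    finally show ?thesis .
  qed
  define A' where "A' = cadj U0 * (A * U0)"
  have A': "A' \<in> carrier_mat ?N ?N" unfolding A'_def using A U0 by auto
  have A'_col0: "A' $$ (i, 0) = (if i = 0 then e else 0)" if i: "i < ?N" for i
  proof -
    have "A' $$ (i, 0) = (\<Sum>k = 0..<?N. cadj U0 $$ (i, k) * (A * U0) $$ (k, 0))"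
      unfolding A'_def using A U0 i by (simp add: scalar_prod_def)
    also have "\<dots> = e * (\<Sum>k = 0..<?N. cadj U0 $$ (i, k) * U0 $$ (k, 0))"
      by (simp add: AU0 sum_distrib_left algebra_simps)
    also have "(\<Sum>k = 0..<?N. cadj U0 $$ (i, k) * U0 $$ (k, 0)) = (cadj U0 * U0) $$ (i, 0)"
      using U0 i by (simp add: scalar_prod_def)
    finally show ?thesis using unitary_mat_simps(1)[OF U0u] i by auto
  qed
  have hA': "cadj A' = A'"
    unfolding A'_def using A U0 hA
    by (simp add: cadj_mult[of _ ?N ?N _ ?N] assoc_mult_mat[of _ ?N ?N _ ?N _ ?N]
        mult_carrier_mat[of _ ?N ?N _ ?N])
  have A'_row0: "A' $$ (0, j) = (if j = 0 then e else 0)" if j: "j < ?N" for j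
  proof -
    have "A' $$ (0, j) = cnj (A' $$ (j, 0))" using A' j hA' by (metis index_cadj carrier_matD zero_less_Suc)
    then show ?thesis using A'_col0[OF j] A'_col0[of 0] by auto
  qed
  define A3 where "A3 = mat m m (\<lambda>(i,j). A' $$ (Suc i, Suc j))"
  have A3: "A3 \<in> carrier_mat m m" unfolding A3_def by auto
  have A'_block: "A' = diag_block e A3"
  proof (rule eq_matI)
    fix i j assume "i < dim_row (diag_block e A3)" "j < dim_col (diag_block e A3)"
    then have i: "i < ?N" and j: "j < ?N" using A3 by auto
    show "A' $$ (i, j) = diag_block e A3 $$ (i, j)"
      using i j A'_col0 A'_row0 by (cases i; cases j) (auto simp: diag_block_def A3_def)
  qed (use A' A3 in auto)
  have hA3: "cadj A3 = A3"
  proof (rule eq_matI)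
    fix i j assume "i < dim_row A3" "j < dim_col A3"
    then have i: "i < m" and j: "j < m" using A3 by auto
    have "cadj A3 $$ (i, j) = cadj A' $$ (Suc i, Suc j)" using A' A3 i j by (simp add: A3_def)
    then show "cadj A3 $$ (i, j) = A3 $$ (i, j)" using hA' i j by (simp add: A3_def)
  qed (use A3 in auto)
  obtain U3 lam where U3u: "unitary_mat m U3" and D3: "cadj U3 * A3 * U3 = mat_diag m lam"
    using Suc.IH[OF A3 hA3] by blast
  have U3: "U3 \<in> carrier_mat m m" using U3u unitary_mat_carrier by auto
  define U1 where "U1 = diag_block 1 U3"
  have U1: "U1 \<in> carrier_mat ?N ?N" unfolding U1_def using U3 by auto
  have "cadj U1 * U1 = 1\<^sub>m ?N"
    unfolding U1_def cadj_diag_block using U3 U3u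
    by (simp add: diag_block_mult[of _ m m _ m] diag_block_one unitary_mat_simps)
  then have U1u: "unitary_mat ?N U1" using unitary_matI[OF U1] by auto
  have "cadj (U0 * U1) * A * (U0 * U1) = cadj U1 * A' * U1"
    unfolding A'_def using A U0 U1
    by (simp add: cadj_mult[of _ ?N ?N _ ?N] assoc_mult_mat[of _ ?N ?N _ ?N _ ?N]
        mult_carrier_mat[of _ ?N ?N _ ?N])
  also have "\<dots> = diag_block e (cadj U3 * A3 * U3)"
    unfolding A'_block U1_def cadj_diag_block using U3 A3
    by (simp add: diag_block_mult[of _ m m _ m] mult_carrier_mat[of _ m m _ m])
  also have "\<dots> = mat_diag ?N (\<lambda>i. if i = 0 then e else lam (i - 1))"
    unfolding D3 diag_block_mat_diag ..
  finally show ?case using unitary_mat_mult[OF U0u U1u] by blast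
qed

lemma hermitian_spectral_decomposition:
  fixes A :: "complex mat"
  assumes A: "A \<in> carrier_mat n n" and h: "cadj A = A"
  shows "\<exists>U lam. unitary_mat n U \<and> A = U * mat_diag n lam * cadj U"
proof -
  obtain U lam where Uu: "unitary_mat n U" and D: "cadj U * A * U = mat_diag n lam"
    using hermitian_unitary_diagonalization[OF A h] by blast
  have U: "U \<in> carrier_mat n n" using Uu unitary_mat_carrier by auto
  have "U * mat_diag n lam * cadj U = U * (cadj U * (A * (U * cadj U)))"
    unfolding D[symmetric] using U A
    by (simp add: assoc_mult_mat[of _ n n _ n _ n] mult_carrier_mat[of _ n n _ n])
  also have "\<dots> = A" using Uu A by (simp add: unitary_mat_simps)
  finally show ?thesis using Uu by metis
qed

section \<open>Functional calculus\<close>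

lemma unitary_diag_fun_eq:
  assumes Uu: "unitary_mat n U" and Vu: "unitary_mat n V"
    and E: "U * mat_diag n d1 * cadj U = V * mat_diag n d2 * cadj V"
  shows "U * mat_diag n (\<lambda>i. h (d1 i)) * cadj U = V * mat_diag n (\<lambda>i. h (d2 i)) * cadj V"
proof -
  have U: "U \<in> carrier_mat n n" and V: "V \<in> carrier_mat n n"
    using Uu Vu unitary_mat_carrier by auto
  define W where "W = cadj V * U"
  have W: "W \<in> carrier_mat n n" unfolding W_def using U V by auto
  note simps = assoc_mult_mat[of _ n n _ n _ n] mult_carrier_mat[of _ n n _ n]
    unitary_mat_simps(1,2)[OF Uu] unitary_mat_simps(1,2)[OF Vu]
    unitary_mat_simps(3,4)[OF Uu, of _ n] unitary_mat_simps(3,4)[OF Vu, of _ n]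
  have "cadj V * (U * mat_diag n d1 * cadj U) * U = cadj V * (V * mat_diag n d2 * cadj V) * U"
    unfolding E ..
  then have WD: "W * mat_diag n d1 = mat_diag n d2 * W"
    unfolding W_def using U V by (simp add: simps)
  have intertwine: "W $$ (i,j) * d1 j = d2 i * W $$ (i,j)" if "i < n" "j < n" for i j
  proof -
    have "(W * mat_diag n d1) $$ (i,j) = (mat_diag n d2 * W) $$ (i,j)" using WD by simp
    then show ?thesis
      using that W by (simp add: mat_diag_mult_left[OF W] mat_diag_mult_right[OF W])
  qed
  text \<open>W intertwines the two diagonals, so it only links equal eigenvalues.\<close>
  have "W * mat_diag n (\<lambda>i. h (d1 i)) = mat_diag n (\<lambda>i. h (d2 i)) * W"
  proof (rule eq_matI)
    fix i j
    assume "i < dim_row (mat_diag n (\<lambda>i. h (d2 i)) * W)" "j < dim_col (mat_diag n (\<lambda>i. h (d2 i)) * W)"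
    then have i: "i < n" and j: "j < n" using W by auto
    have "W $$ (i,j) * h (d1 j) = h (d2 i) * W $$ (i,j)"
    proof (cases "W $$ (i,j) = 0")
      case False
      then have "d1 j = d2 i" using intertwine[OF i j] by (simp add: mult.commute)
      then show ?thesis by (simp add: mult.commute)
    qed simp
    then show "(W * mat_diag n (\<lambda>i. h (d1 i))) $$ (i, j) = (mat_diag n (\<lambda>i. h (d2 i)) * W) $$ (i, j)"
      using i j W by (simp add: mat_diag_mult_left[OF W] mat_diag_mult_right[OF W])
  qed (use W in auto)
  then have "V * (W * mat_diag n (\<lambda>i. h (d1 i))) * cadj U = V * (mat_diag n (\<lambda>i. h (d2 i)) * W) * cadj U"
    by simp
  then show ?thesis unfolding W_def using U V by (simp add: simps)
qed

lemma mat_fun_unitary_diag: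
  assumes Uu: "unitary_mat n U" and A: "A = U * mat_diag n lam * cadj U"
  shows "mat_fun f A = U * mat_diag n (\<lambda>j. f (lam j)) * cadj U"
proof -
  have n: "dim_row A = n" using A unitary_mat_carrier[OF Uu] by simp
  have "\<exists>F U' lam'. unitary_mat n U' \<and> A = U' * mat_diag n lam' * cadj U' \<and>
      F = U' * mat_diag n (\<lambda>j. f (lam' j)) * cadj U'"
    using Uu A by blast
  from someI_ex[OF this[folded n]] obtain U' lam' where U'u: "unitary_mat n U'"
    and A': "A = U' * mat_diag n lam' * cadj U'"
    and F: "mat_fun f A = U' * mat_diag n (\<lambda>j. f (lam' j)) * cadj U'"
    unfolding mat_fun_def n by blast
  show ?thesis unfolding F by (rule unitary_diag_fun_eq[OF U'u Uu]) (use A A' in simp)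
qed

lemma mat_diag_mult_mat_diag_assoc:
  "X \<in> carrier_mat n k \<Longrightarrow> mat_diag n a * (mat_diag n b * X) = mat_diag n (\<lambda>i. a i * b i) * X"
  by (simp add: assoc_mult_mat[of _ n n _ n _ k, symmetric])

lemma mat_abs_unitary_diag:
  assumes Vu: "unitary_mat n V" and AV: "A = V * mat_diag n mu * cadj V"
  shows "mat_abs A = V * mat_diag n (\<lambda>j. complex_of_real (cmod (mu j))) * cadj V"
proof -
  have V: "V \<in> carrier_mat n n" using Vu unitary_mat_carrier by auto
  have "cadj A * A = (V * mat_diag n (\<lambda>i. cnj (mu i)) * cadj V) * (V * mat_diag n mu * cadj V)"
    unfolding AV using V
    by (simp add: cadj_mult[of _ n n _ n] mult_carrier_mat[of _ n n _ n] cadj_mat_diag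
        assoc_mult_mat[of _ n n _ n _ n])
  also have "\<dots> = V * mat_diag n (\<lambda>i. cnj (mu i) * mu i) * cadj V"
    using V unitary_mat_simps(3)[OF Vu, of _ n]
    by (simp add: assoc_mult_mat[of _ n n _ n _ n] mult_carrier_mat[of _ n n _ n]
        mat_diag_mult_mat_diag_assoc[of _ n n])
  finally have "mat_abs A = V * mat_diag n (\<lambda>j. complex_of_real (sqrt (Re (cnj (mu j) * mu j)))) * cadj V"
    unfolding mat_abs_def by (rule mat_fun_unitary_diag[OF Vu])
  then show ?thesis by (simp add: mult.commute[of "cnj _"] complex_mult_cnj cmod_def)
qed

lemma unitary_diag_in_spectrum:
  assumes Vu: "unitary_mat n V" and AV: "A = V * mat_diag n mu * cadj V" and i: "i < n"
  shows "mu i \<in> spectrum A"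
proof -
  have V: "V \<in> carrier_mat n n" using Vu unitary_mat_carrier by auto
  have A: "A \<in> carrier_mat n n" unfolding AV using V by auto
  have AV': "A * V = V * mat_diag n mu"
    unfolding AV using V unitary_mat_simps(1)[OF Vu]
    by (simp add: assoc_mult_mat[of _ n n _ n _ n] mult_carrier_mat[of _ n n _ n])
  have "A *\<^sub>v col V i = col (A * V) i" using col_mult2[OF A V i] by simp
  also have "\<dots> = mu i \<cdot>\<^sub>v col V i" unfolding AV'
    using V i by (intro eq_vecI) (auto simp: mat_diag_mult_right[OF V] mult.commute)
  finally have Av: "A *\<^sub>v col V i = mu i \<cdot>\<^sub>v col V i" .
  have "col V i \<noteq> 0\<^sub>v n"
  proof
    assume "col V i = 0\<^sub>v n"
    then have "(cadj V * V) $$ (i,i) = 0" using V i by (simp add: scalar_prod_def)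
    then show False using unitary_mat_simps(1)[OF Vu] i by simp
  qed
  then have "eigenvector A (col V i) (mu i)" unfolding eigenvector_def using V Av A by auto
  then show ?thesis unfolding spectrum_def eigenvalue_def by auto
qed

lemma hermitian_mat_fun_decomposition:
  assumes A: "A \<in> carrier_mat n n" and "hermitian_mat A"
  obtains V mu where "unitary_mat n V" "A = V * mat_diag n mu * cadj V"
    "mat_fun f A = V * mat_diag n (\<lambda>j. f (mu j)) * cadj V"
    "mat_abs A = V * mat_diag n (\<lambda>j. complex_of_real (cmod (mu j))) * cadj V"
    "\<And>i. i < n \<Longrightarrow> mu i \<in> spectrum A"
proof -
  obtain V mu where Vu: "unitary_mat n V" and AV: "A = V * mat_diag n mu * cadj V"
    using hermitian_spectral_decomposition[OF A] assms(2) unfolding hermitian_mat_def by blast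
  show thesis
    by (rule that[OF Vu AV mat_fun_unitary_diag[OF Vu AV] mat_abs_unitary_diag[OF Vu AV]
          unitary_diag_in_spectrum[OF Vu AV]])
qed

section \<open>The Hilbert--Schmidt norm\<close>

lemma hs_norm_eq_sqrt_trace_cadj_mult:
  assumes M: "M \<in> carrier_mat n k"
  shows "hs_norm M = sqrt (\<Sum>j<k. Re ((cadj M * M) $$ (j,j)))"
proof -
  have "(cadj M * M) $$ (j,j) = complex_of_real (\<Sum>i<n. (cmod (M $$ (i,j)))\<^sup>2)" if "j < k" for j
    using M that by (auto simp: scalar_prod_def atLeast0LessThan intro!: sum.cong)
       (metis complex_norm_square of_real_power mult.commute)
  then have "(\<Sum>j<k. Re ((cadj M * M) $$ (j,j))) = (\<Sum>j<k. \<Sum>i<n. (cmod (M $$ (i,j)))\<^sup>2)"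
    by simp
  also have "\<dots> = (\<Sum>i<n. \<Sum>j<k. (cmod (M $$ (i,j)))\<^sup>2)" by (rule sum.swap)
  finally show ?thesis unfolding hs_norm_def using M by auto
qed

lemma hs_norm_unitary_mult_left:
  assumes Uu: "unitary_mat n U" and Z: "Z \<in> carrier_mat n k"
  shows "hs_norm (U * Z) = hs_norm Z"
proof -
  have U: "U \<in> carrier_mat n n" using Uu unitary_mat_carrier by auto
  have "cadj (U * Z) * (U * Z) = cadj Z * (cadj U * (U * Z))"
    using U Z by (simp add: cadj_mult[OF U Z] assoc_mult_mat[of _ k n _ n _ k])
  also have "\<dots> = cadj Z * Z" using unitary_mat_simps(3)[OF Uu Z] by simp
  finally show ?thesis
    using U Z by (simp add: hs_norm_eq_sqrt_trace_cadj_mult[of _ n k])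
qed

lemma hs_norm_cadj: "hs_norm (cadj M) = hs_norm M"
  unfolding hs_norm_def by (simp add: sum.swap[of _ "{..<dim_col M}"])

lemma hs_norm_unitary_sandwich:
  assumes Vu: "unitary_mat n V" and Wu: "unitary_mat n W" and P: "P \<in> carrier_mat n n"
  shows "hs_norm (V * P * cadj W) = hs_norm P"
proof -
  have V: "V \<in> carrier_mat n n" and W: "W \<in> carrier_mat n n"
    using Vu Wu unitary_mat_carrier by auto
  have "hs_norm (V * P * cadj W) = hs_norm (P * cadj W)"
    using V W P hs_norm_unitary_mult_left[OF Vu, of "P * cadj W" n]
    by (simp add: assoc_mult_mat[of _ n n _ n _ n])
  also have "\<dots> = hs_norm (W * cadj P)"
    using W P by (metis hs_norm_cadj cadj_mult[of P n n "cadj W" n] cadj_cadj cadj_carrier_mat)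
  also have "\<dots> = hs_norm P"
    using P hs_norm_unitary_mult_left[OF Wu, of "cadj P" n] by (simp add: hs_norm_cadj)
  finally show ?thesis .
qed

lemma hs_norm_mono:
  assumes P: "P \<in> carrier_mat n k" and Q: "Q \<in> carrier_mat n k"
    and le: "\<And>i j. i < n \<Longrightarrow> j < k \<Longrightarrow> cmod (P $$ (i,j)) \<le> cmod (Q $$ (i,j))"
  shows "hs_norm P \<le> hs_norm Q"
  unfolding hs_norm_def using P Q le
  by (auto intro!: real_sqrt_le_mono sum_mono power_mono)

section \<open>Growth of the Caratheodory class\<close>

lemma cmod_diff_one_less_add_one:
  fixes w :: complex
  assumes "Re w > 0"
  shows "cmod (w - 1) < cmod (w + 1)"
proof -
  have "(cmod (w - 1))\<^sup>2 = (Re w - 1)\<^sup>2 + (Im w)\<^sup>2" "(cmod (w + 1))\<^sup>2 = (Re w + 1)\<^sup>2 + (Im w)\<^sup>2"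
    by (simp_all add: cmod_power2)
  then have "(cmod (w - 1))\<^sup>2 < (cmod (w + 1))\<^sup>2"
    using assms by (simp add: power2_eq_square algebra_simps)
  then show ?thesis by (rule power_less_imp_less_base) simp
qed

text \<open>Schwarz's lemma for the Cayley transform (f - 1)/(f + 1), a self-map of the disc fixing 0.\<close>
lemma Hclass_norm_le:
  assumes f: "f \<in> Hclass" and z: "cmod z < 1"
  shows "cmod (f z) \<le> (1 + cmod z) / (1 - cmod z)"
proof -
  have hol: "f holomorphic_on ball 0 1" and re: "\<And>w. w \<in> ball 0 1 \<Longrightarrow> Re (f w) > 0"
    and f0: "f 0 = 1" using f unfolding Hclass_def by auto
  define g where "g w = (f w - 1) / (f w + 1)" for w
  have nz: "f w + 1 \<noteq> 0" if "w \<in> ball 0 1" for w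
  proof
    assume "f w + 1 = 0"
    then have "Re (f w) = -1" by (simp add: complex_eq_iff)
    then show False using re[OF that] by simp
  qed
  have holg: "g holomorphic_on ball 0 1"
    unfolding g_def using hol nz by (auto intro!: holomorphic_intros)
  have g0: "g 0 = 0" unfolding g_def f0 by simp
  have g_lt: "norm (g w) < 1" if "norm w < 1" for w
  proof -
    have w: "w \<in> ball 0 1" using that by simp
    have "cmod (f w - 1) < cmod (f w + 1)" using cmod_diff_one_less_add_one re[OF w] by blast
    then show ?thesis unfolding g_def using nz[OF w] by (simp add: norm_divide divide_less_eq)
  qed
  define p where "p = g z"
  have p_le: "cmod p \<le> cmod z" using Schwarz_Lemma(1)[OF holg g0 g_lt z] unfolding p_def by simp
  have p1: "cmod p < 1" using p_le z by simp
  have "p * (f z + 1) = f z - 1" unfolding p_def g_def using nz z by simp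
  then have "f z * (1 - p) = 1 + p" by (simp add: algebra_simps)
  moreover have "1 - p \<noteq> 0" using p1 by auto
  ultimately have "f z = (1 + p) / (1 - p)" by (simp add: field_simps)
  then have "cmod (f z) = cmod (1 + p) / cmod (1 - p)" by (simp add: norm_divide)
  also have "\<dots> \<le> (1 + cmod p) / (1 - cmod p)"
    using norm_triangle_ineq[of 1 p] norm_triangle_ineq2[of 1 p] p1 by (intro frac_le) auto
  also have "\<dots> \<le> (1 + cmod z) / (1 - cmod z)"
    using p_le p1 z by (simp add: divide_simps) (simp add: algebra_simps)
  finally show ?thesis .
qed

lemma dA_nonneg: "0 \<le> dA A"
  unfolding dA_def by (rule setdist_pos_le)

lemma dA_pos:
  assumes A: "A \<in> carrier_mat n n" and sp: "spectrum A \<subseteq> ball 0 1" and z: "z \<in> spectrum A"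
  shows "0 < dA A"
proof -
  have "finite (spectrum A)" using card_finite_spectrum[OF A] by simp
  then have "setdist (sphere 0 1) (spectrum A) \<noteq> 0"
    using setdist_eq_0_compact_closed[of "sphere (0::complex) 1" "spectrum A"] z sp
    by (auto simp: finite_imp_closed)
  then show ?thesis using dA_nonneg[of A] unfolding dA_def by linarith
qed

lemma dA_le:
  assumes sp: "spectrum A \<subseteq> ball 0 1" and z: "z \<in> spectrum A"
  shows "dA A \<le> 1 - cmod z"
proof -
  have z1: "cmod z < 1" using z sp by auto
  define x where "x = (if z = 0 then 1 else z / complex_of_real (cmod z))"
  have x: "x \<in> sphere 0 1" unfolding x_def by (auto simp: norm_divide)
  have "dist x z = 1 - cmod z"
  proof (cases "z = 0")
    case False
    have "x - z = z * complex_of_real (1 / cmod z - 1)"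
      unfolding x_def using False by (simp add: field_simps)
    then have "dist x z = cmod z * \<bar>1 / cmod z - 1\<bar>"
      unfolding dist_norm by (simp only: norm_mult norm_of_real)
    also have "\<bar>1 / cmod z - 1\<bar> = 1 / cmod z - 1" using False z1 by (simp add: field_simps)
    finally show ?thesis using False by (simp add: right_diff_distrib)
  qed (simp add: x_def)
  then show ?thesis unfolding dA_def using setdist_le_dist[OF x z] by simp
qed

lemma Hclass_norm_le_dA:
  assumes A: "A \<in> carrier_mat n n" and sp: "spectrum A \<subseteq> ball 0 1" and z: "z \<in> spectrum A"
    and f: "f \<in> Hclass"
  shows "cmod (f z) \<le> (1 + cmod z) / dA A"
proof -
  have z1: "cmod z < 1" using z sp by auto
  have "cmod (f z) \<le> (1 + cmod z) / (1 - cmod z)" using Hclass_norm_le[OF f z1] .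
  also have "\<dots> \<le> (1 + cmod z) / dA A"
    using dA_pos[OF A sp z] dA_le[OF sp z] z1 by (intro divide_left_mono) auto
  finally show ?thesis .
qed

section \<open>Reduction to entrywise scalar estimates\<close>

lemma cmod_sylvester_le:
  fixes p q y :: complex and a b c d :: real
  assumes "0 \<le> a" "0 \<le> b" "0 \<le> c" "0 \<le> d"
    and p: "cmod p \<le> (1 + a) / c" and q: "cmod q \<le> (1 + b) / d"
  shows "cmod (p * y + y * q)
           \<le> cmod (1 / of_real c * (y + of_real a * y) + 1 / of_real d * (y + y * of_real b))"
    and "cmod (p * y - y * q)
           \<le> cmod (1 / of_real c * (y + of_real a * y) + 1 / of_real d * (y + y * of_real b))"
    and "cmod (p * y * q + y)
           \<le> cmod (1 / of_real c * (1 + of_real a) * y * (1 / of_real d * (1 + of_real b)) + y)"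
    and "cmod (p * y * q - y)
           \<le> cmod (1 / of_real c * (1 + of_real a) * y * (1 / of_real d * (1 + of_real b)) + y)"
proof -
  define P Q where "P = (1 + a) / c" and "Q = (1 + b) / d"
  have PQ: "0 \<le> P" "0 \<le> Q" unfolding P_def Q_def using assms by auto
  then have PQ_nonneg: "0 \<le> P + Q" "0 \<le> P * Q + 1" by auto
  have cmod_scale: "cmod (y * of_real r) = cmod y * r" if "0 \<le> r" for r
    using that by (simp add: norm_mult)
  have py: "cmod (p * y) \<le> cmod y * P"
    using mult_left_mono[OF p[folded P_def] norm_ge_zero[of y]] by (simp add: norm_mult mult.commute)
  have yq: "cmod (y * q) \<le> cmod y * Q"
    using mult_left_mono[OF q[folded Q_def] norm_ge_zero[of y]] by (simp add: norm_mult)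
  have "cmod p * cmod q \<le> P * Q"
    using p q PQ unfolding P_def Q_def by (intro mult_mono) auto
  then have "cmod p * cmod q * cmod y \<le> P * Q * cmod y" by (rule mult_right_mono) simp
  then have pyq: "cmod (p * y * q) \<le> cmod y * (P * Q)" by (simp add: norm_mult ac_simps)
  have "1 / of_real c * (y + of_real a * y) + 1 / of_real d * (y + y * of_real b) = y * of_real (P + Q)"
    unfolding P_def Q_def by (simp add: of_real_divide algebra_simps add_divide_distrib)
  then have sum_rhs: "cmod (1 / of_real c * (y + of_real a * y) + 1 / of_real d * (y + y * of_real b))
      = cmod y * (P + Q)"
    by (simp only: cmod_scale PQ_nonneg)
  have "1 / of_real c * (1 + of_real a) * y * (1 / of_real d * (1 + of_real b)) + y
      = y * of_real (P * Q + 1)"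
    unfolding P_def Q_def by (simp add: of_real_divide algebra_simps)
  then have prod_rhs: "cmod (1 / of_real c * (1 + of_real a) * y * (1 / of_real d * (1 + of_real b)) + y)
      = cmod y * (P * Q + 1)"
    by (simp only: cmod_scale PQ_nonneg)
  show "cmod (p * y + y * q) \<le> cmod (1 / of_real c * (y + of_real a * y) + 1 / of_real d * (y + y * of_real b))"
    using norm_triangle_ineq[of "p * y" "y * q"] py yq unfolding sum_rhs by (simp add: distrib_left)
  show "cmod (p * y - y * q) \<le> cmod (1 / of_real c * (y + of_real a * y) + 1 / of_real d * (y + y * of_real b))"
    using norm_triangle_ineq4[of "p * y" "y * q"] py yq unfolding sum_rhs by (simp add: distrib_left)
  show "cmod (p * y * q + y)
      \<le> cmod (1 / of_real c * (1 + of_real a) * y * (1 / of_real d * (1 + of_real b)) + y)"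
    using norm_triangle_ineq[of "p * y * q" y] pyq unfolding prod_rhs by (simp add: distrib_left)
  show "cmod (p * y * q - y)
      \<le> cmod (1 / of_real c * (1 + of_real a) * y * (1 / of_real d * (1 + of_real b)) + y)"
    using norm_triangle_ineq4[of "p * y * q" y] pyq unfolding prod_rhs by (simp add: distrib_left)
qed

lemma hs_norm_sylvester_diag_le:
  fixes a b :: "nat \<Rightarrow> real" and c d :: real and p q :: "nat \<Rightarrow> complex"
  assumes Y: "Y \<in> carrier_mat n n" and cd: "0 \<le> c" "0 \<le> d"
    and a: "\<And>i. i < n \<Longrightarrow> 0 \<le> a i" and b: "\<And>j. j < n \<Longrightarrow> 0 \<le> b j"
    and p: "\<And>i. i < n \<Longrightarrow> cmod (p i) \<le> (1 + a i) / c"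
    and q: "\<And>j. j < n \<Longrightarrow> cmod (q j) \<le> (1 + b j) / d"
  defines "Am \<equiv> mat_diag n (\<lambda>i. complex_of_real (a i))"
    and "Bm \<equiv> mat_diag n (\<lambda>j. complex_of_real (b j))"
  shows "hs_norm (mat_diag n p * Y + Y * mat_diag n q)
           \<le> hs_norm (1 / of_real c \<cdot>\<^sub>m (Y + Am * Y) + 1 / of_real d \<cdot>\<^sub>m (Y + Y * Bm))"
    and "hs_norm (mat_diag n p * Y - Y * mat_diag n q)
           \<le> hs_norm (1 / of_real c \<cdot>\<^sub>m (Y + Am * Y) + 1 / of_real d \<cdot>\<^sub>m (Y + Y * Bm))"
    and "hs_norm (mat_diag n p * Y * mat_diag n q + Y)
           \<le> hs_norm (1 / of_real c \<cdot>\<^sub>m (1\<^sub>m n + Am) * Y * (1 / of_real d \<cdot>\<^sub>m (1\<^sub>m n + Bm)) + Y)"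
    and "hs_norm (mat_diag n p * Y * mat_diag n q - Y)
           \<le> hs_norm (1 / of_real c \<cdot>\<^sub>m (1\<^sub>m n + Am) * Y * (1 / of_real d \<cdot>\<^sub>m (1\<^sub>m n + Bm)) + Y)"
proof -
  have left: "1 / of_real c \<cdot>\<^sub>m (1\<^sub>m n + Am) = mat_diag n (\<lambda>i. 1 / of_real c * (1 + of_real (a i)))"
    unfolding Am_def by (rule eq_matI) (auto simp: mat_diag_def)
  have right: "1 / of_real d \<cdot>\<^sub>m (1\<^sub>m n + Bm) = mat_diag n (\<lambda>j. 1 / of_real d * (1 + of_real (b j)))"
    unfolding Bm_def by (rule eq_matI) (auto simp: mat_diag_def)
  note entry = cmod_sylvester_le[OF a b cd p q, of _ _ "Y $$ (_, _)"]
  note diag_mult = mat_diag_mult_left[of _ n n] mat_diag_mult_right[of _ n n]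
  show "hs_norm (mat_diag n p * Y + Y * mat_diag n q)
      \<le> hs_norm (1 / of_real c \<cdot>\<^sub>m (Y + Am * Y) + 1 / of_real d \<cdot>\<^sub>m (Y + Y * Bm))"
    by (rule hs_norm_mono[of _ n n]) (use Y entry(1) in \<open>auto simp: Am_def Bm_def diag_mult\<close>)
  show "hs_norm (mat_diag n p * Y - Y * mat_diag n q)
      \<le> hs_norm (1 / of_real c \<cdot>\<^sub>m (Y + Am * Y) + 1 / of_real d \<cdot>\<^sub>m (Y + Y * Bm))"
    by (rule hs_norm_mono[of _ n n]) (use Y entry(2) in \<open>auto simp: Am_def Bm_def diag_mult\<close>)
  show "hs_norm (mat_diag n p * Y * mat_diag n q + Y)
      \<le> hs_norm (1 / of_real c \<cdot>\<^sub>m (1\<^sub>m n + Am) * Y * (1 / of_real d \<cdot>\<^sub>m (1\<^sub>m n + Bm)) + Y)"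
    by (rule hs_norm_mono[of _ n n]) (use Y entry(3) in \<open>auto simp: left right diag_mult\<close>)
  show "hs_norm (mat_diag n p * Y * mat_diag n q - Y)
      \<le> hs_norm (1 / of_real c \<cdot>\<^sub>m (1\<^sub>m n + Am) * Y * (1 / of_real d \<cdot>\<^sub>m (1\<^sub>m n + Bm)) + Y)"
    by (rule hs_norm_mono[of _ n n]) (use Y entry(4) in \<open>auto simp: left right diag_mult\<close>)
qed

lemma sandwich_add:
  assumes "V \<in> carrier_mat n n" "W \<in> carrier_mat n n" "P \<in> carrier_mat n n" "Q \<in> carrier_mat n n"
  shows "V * P * cadj W + V * Q * cadj W = V * (P + Q) * cadj W"
  using assms by (simp add: mult_add_distrib_mat[of V n n] add_mult_distrib_mat[of _ n n _ _ n])

lemma sandwich_minus: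
  assumes "V \<in> carrier_mat n n" "W \<in> carrier_mat n n" "P \<in> carrier_mat n n" "Q \<in> carrier_mat n n"
  shows "V * P * cadj W - V * Q * cadj W = V * (P - Q) * cadj W"
  using assms by (simp add: mult_minus_distrib_mat[of V n n] minus_mult_distrib_mat[of _ n n _ _ n])

lemma sandwich_smult:
  assumes "V \<in> carrier_mat n n" "W \<in> carrier_mat n n" "P \<in> carrier_mat n n"
  shows "c \<cdot>\<^sub>m (V * P * cadj W) = V * (c \<cdot>\<^sub>m P) * cadj W"
  using assms by (simp add: mult_smult_distrib[of V n n] mult_smult_assoc_mat[of _ n n _ n])

lemma sandwich_mult_sandwich:
  assumes Vu: "unitary_mat n V" and U: "U \<in> carrier_mat n n" and W: "W \<in> carrier_mat n n"
    and P: "P \<in> carrier_mat n n" and Q: "Q \<in> carrier_mat n n"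
  shows "(U * P * cadj V) * (V * Q * cadj W) = U * (P * Q) * cadj W"
  using unitary_mat_carrier[OF Vu] assms unitary_mat_simps(3)[OF Vu, of _ n]
  by (simp add: assoc_mult_mat[of _ n n _ n _ n] mult_carrier_mat[of _ n n _ n])

lemma one_mat_unitary_sandwich: "unitary_mat n V \<Longrightarrow> 1\<^sub>m n = V * 1\<^sub>m n * cadj V"
  using unitary_mat_carrier unitary_mat_simps(2) by (metis right_mult_one_mat)

lemma sylvester_sandwich:
  assumes Vu: "unitary_mat n V" and Wu: "unitary_mat n W" and Y: "Y \<in> carrier_mat n n"
    and P: "P \<in> carrier_mat n n" and Q: "Q \<in> carrier_mat n n"
    and Am: "Am \<in> carrier_mat n n" and Bm: "Bm \<in> carrier_mat n n"
    and X: "X = V * Y * cadj W"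
  shows "(V * P * cadj V) * X + X * (W * Q * cadj W) = V * (P * Y + Y * Q) * cadj W"
    and "(V * P * cadj V) * X - X * (W * Q * cadj W) = V * (P * Y - Y * Q) * cadj W"
    and "c \<cdot>\<^sub>m (X + (V * Am * cadj V) * X) + d \<cdot>\<^sub>m (X + X * (W * Bm * cadj W))
           = V * (c \<cdot>\<^sub>m (Y + Am * Y) + d \<cdot>\<^sub>m (Y + Y * Bm)) * cadj W"
    and "(V * P * cadj V) * X * (W * Q * cadj W) + X = V * (P * Y * Q + Y) * cadj W"
    and "(V * P * cadj V) * X * (W * Q * cadj W) - X = V * (P * Y * Q - Y) * cadj W"
    and "c \<cdot>\<^sub>m (1\<^sub>m n + V * Am * cadj V) * X * (d \<cdot>\<^sub>m (1\<^sub>m n + W * Bm * cadj W)) + X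
           = V * (c \<cdot>\<^sub>m (1\<^sub>m n + Am) * Y * (d \<cdot>\<^sub>m (1\<^sub>m n + Bm)) + Y) * cadj W"
proof -
  have V: "V \<in> carrier_mat n n" and W: "W \<in> carrier_mat n n"
    using Vu Wu unitary_mat_carrier by auto
  note mult = sandwich_mult_sandwich[OF Vu V W] sandwich_mult_sandwich[OF Wu V W]
  note lin = sandwich_add[OF V W] sandwich_minus[OF V W] sandwich_smult[OF V W]
    sandwich_add[OF V V] sandwich_smult[OF V V] sandwich_add[OF W W] sandwich_smult[OF W W]
  have left: "c \<cdot>\<^sub>m (1\<^sub>m n + V * Am * cadj V) = V * (c \<cdot>\<^sub>m (1\<^sub>m n + Am)) * cadj V"
    by (subst one_mat_unitary_sandwich[OF Vu]) (use Am lin in simp)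
  have right: "d \<cdot>\<^sub>m (1\<^sub>m n + W * Bm * cadj W) = W * (d \<cdot>\<^sub>m (1\<^sub>m n + Bm)) * cadj W"
    by (subst one_mat_unitary_sandwich[OF Wu]) (use Bm lin in simp)
  show "(V * P * cadj V) * X + X * (W * Q * cadj W) = V * (P * Y + Y * Q) * cadj W"
    "(V * P * cadj V) * X - X * (W * Q * cadj W) = V * (P * Y - Y * Q) * cadj W"
    "c \<cdot>\<^sub>m (X + (V * Am * cadj V) * X) + d \<cdot>\<^sub>m (X + X * (W * Bm * cadj W))
       = V * (c \<cdot>\<^sub>m (Y + Am * Y) + d \<cdot>\<^sub>m (Y + Y * Bm)) * cadj W"
    "(V * P * cadj V) * X * (W * Q * cadj W) + X = V * (P * Y * Q + Y) * cadj W"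
    "(V * P * cadj V) * X * (W * Q * cadj W) - X = V * (P * Y * Q - Y) * cadj W"
    unfolding X using Y P Q Am Bm by (simp_all add: mult lin)
  show "c \<cdot>\<^sub>m (1\<^sub>m n + V * Am * cadj V) * X * (d \<cdot>\<^sub>m (1\<^sub>m n + W * Bm * cadj W)) + X
      = V * (c \<cdot>\<^sub>m (1\<^sub>m n + Am) * Y * (d \<cdot>\<^sub>m (1\<^sub>m n + Bm)) + Y) * cadj W"
    unfolding left right X using Y Am Bm by (simp add: mult lin mult_carrier_mat[of _ n n _ n])
qed

lemma hs_norm_sylvester_le:
  fixes a b :: "nat \<Rightarrow> real" and c d :: real and p q :: "nat \<Rightarrow> complex"
  assumes Vu: "unitary_mat n V" and Wu: "unitary_mat n W" and X: "X \<in> carrier_mat n n"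
    and cd: "0 \<le> c" "0 \<le> d"
    and a: "\<And>i. i < n \<Longrightarrow> 0 \<le> a i" and b: "\<And>j. j < n \<Longrightarrow> 0 \<le> b j"
    and p: "\<And>i. i < n \<Longrightarrow> cmod (p i) \<le> (1 + a i) / c"
    and q: "\<And>j. j < n \<Longrightarrow> cmod (q j) \<le> (1 + b j) / d"
    and F: "F = V * mat_diag n p * cadj V" and G: "G = W * mat_diag n q * cadj W"
    and AbsA: "AbsA = V * mat_diag n (\<lambda>i. complex_of_real (a i)) * cadj V"
    and AbsB: "AbsB = W * mat_diag n (\<lambda>j. complex_of_real (b j)) * cadj W"
  shows "hs_norm (F * X + X * G)
           \<le> hs_norm ((1 / complex_of_real c) \<cdot>\<^sub>m (X + AbsA * X)
                      + (1 / complex_of_real d) \<cdot>\<^sub>m (X + X * AbsB)) \<and>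
         hs_norm (F * X - X * G)
           \<le> hs_norm ((1 / complex_of_real c) \<cdot>\<^sub>m (X + AbsA * X)
                      + (1 / complex_of_real d) \<cdot>\<^sub>m (X + X * AbsB)) \<and>
         hs_norm (F * X * G + X)
           \<le> hs_norm ((1 / complex_of_real c) \<cdot>\<^sub>m (1\<^sub>m n + AbsA) * X
                        * ((1 / complex_of_real d) \<cdot>\<^sub>m (1\<^sub>m n + AbsB)) + X) \<and>
         hs_norm (F * X * G - X)
           \<le> hs_norm ((1 / complex_of_real c) \<cdot>\<^sub>m (1\<^sub>m n + AbsA) * X
                        * ((1 / complex_of_real d) \<cdot>\<^sub>m (1\<^sub>m n + AbsB)) + X)"
proof -
  have V: "V \<in> carrier_mat n n" and W: "W \<in> carrier_mat n n"
    using Vu Wu unitary_mat_carrier by auto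
  define Y where "Y = cadj V * X * W"
  have Y: "Y \<in> carrier_mat n n" unfolding Y_def using V W X by auto
  have XY: "X = V * Y * cadj W"
    unfolding Y_def using V W X unitary_mat_simps(2)[OF Wu] unitary_mat_simps(4)[OF Vu, of _ n]
    by (simp add: assoc_mult_mat[of _ n n _ n _ n] mult_carrier_mat[of _ n n _ n])
  note sandwich = sylvester_sandwich[where P = "mat_diag n p" and Q = "mat_diag n q"
      and Am = "mat_diag n (\<lambda>i. complex_of_real (a i))"
      and Bm = "mat_diag n (\<lambda>j. complex_of_real (b j))",
      OF Vu Wu Y mat_diag_dim mat_diag_dim mat_diag_dim mat_diag_dim XY, folded F G AbsA AbsB]
  note diag = hs_norm_sylvester_diag_le[where a = a and b = b and p = p and q = q, OF Y cd a b p q]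
  show ?thesis
    unfolding sandwich using diag Y by (simp add: hs_norm_unitary_sandwich[OF Vu Wu] minus_carrier_mat)
qed

theorem theorem3p3:
  fixes n :: nat and A B X :: "complex mat" and f g :: "complex \<Rightarrow> complex"
  assumes "A \<in> carrier_mat n n" and "B \<in> carrier_mat n n" and "X \<in> carrier_mat n n"
    and "hermitian_mat A" and "hermitian_mat B"
    and "spectrum A \<union> spectrum B \<subseteq> ball 0 1"
    and "f \<in> Hclass" and "g \<in> Hclass"
  shows "hs_norm (mat_fun f A * X + X * mat_fun g B)
           \<le> hs_norm ((1 / complex_of_real (dA A)) \<cdot>\<^sub>m (X + mat_abs A * X)
                      + (1 / complex_of_real (dA B)) \<cdot>\<^sub>m (X + X * mat_abs B)) \<and>
         hs_norm (mat_fun f A * X - X * mat_fun g B)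
           \<le> hs_norm ((1 / complex_of_real (dA A)) \<cdot>\<^sub>m (X + mat_abs A * X)
                      + (1 / complex_of_real (dA B)) \<cdot>\<^sub>m (X + X * mat_abs B)) \<and>
         hs_norm (mat_fun f A * X * mat_fun g B + X)
           \<le> hs_norm ((1 / complex_of_real (dA A)) \<cdot>\<^sub>m (1\<^sub>m n + mat_abs A) * X
                        * ((1 / complex_of_real (dA B)) \<cdot>\<^sub>m (1\<^sub>m n + mat_abs B)) + X) \<and>
         hs_norm (mat_fun f A * X * mat_fun g B - X)
           \<le> hs_norm ((1 / complex_of_real (dA A)) \<cdot>\<^sub>m (1\<^sub>m n + mat_abs A) * X
                        * ((1 / complex_of_real (dA B)) \<cdot>\<^sub>m (1\<^sub>m n + mat_abs B)) + X)"
proof -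
  obtain V mu where Vu: "unitary_mat n V"
    and fA: "mat_fun f A = V * mat_diag n (\<lambda>j. f (mu j)) * cadj V"
    and absA: "mat_abs A = V * mat_diag n (\<lambda>j. complex_of_real (cmod (mu j))) * cadj V"
    and mu: "\<And>i. i < n \<Longrightarrow> mu i \<in> spectrum A"
    using hermitian_mat_fun_decomposition[OF assms(1,4)] by metis
  obtain W nu where Wu: "unitary_mat n W"
    and gB: "mat_fun g B = W * mat_diag n (\<lambda>j. g (nu j)) * cadj W"
    and absB: "mat_abs B = W * mat_diag n (\<lambda>j. complex_of_real (cmod (nu j))) * cadj W"
    and nu: "\<And>j. j < n \<Longrightarrow> nu j \<in> spectrum B"
    using hermitian_mat_fun_decomposition[OF assms(2,5)] by metis
  have "cmod (f (mu i)) \<le> (1 + cmod (mu i)) / dA A" if "i < n" for i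
    using Hclass_norm_le_dA[OF assms(1) _ mu[OF that] assms(7)] assms(6) by blast
  moreover have "cmod (g (nu j)) \<le> (1 + cmod (nu j)) / dA B" if "j < n" for j
    using Hclass_norm_le_dA[OF assms(2) _ nu[OF that] assms(8)] assms(6) by blast
  ultimately show ?thesis
    by (intro hs_norm_sylvester_le[OF Vu Wu assms(3) dA_nonneg dA_nonneg _ _ _ _ fA gB absA absB]) auto
qed

end
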